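(* Let $X$ be a topological space, $\Lambda$ a real Hausdorff topological vector space, $Y$ a topological space and $y_0\in Y$. Let $\varphi\in\mathcal{G}$, $\Psi\in\mathcal{H}$ and $J\in\mathcal{M}$, and assume that $\varphi(\Psi(x,\cdot))$ is convex on $\Lambda$ for each $x\in X$. Let $\mu>\theta(\varphi,\Psi,J)$ and let $\mathcal{N}$ be a filtering cover of $X$ such that, for each $A\in\mathcal{N}$, the function $x\mapsto J(x)-\mu\varphi(\Psi(x,\lambda))$ is lower semicontinuous and inf-compact in $A$ for all $\lambda\in\mathrm{conv}(\{\lambda_x:x\in X\})$. Then there exist $A\in\mathcal{N}$ and $\lambda^*\in\mathrm{conv}(\{\lambda_x:x\in A\})$ such that the restriction to $A$ of the function $x\mapsto J(x)-\mu\varphi(\Psi(x,\lambda^* ))$ has at least two global minima.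
   Context: A family $\mathcal{N}$ of non-empty subsets of $X$ is a filtering cover of $X$ if $\bigcup_{A\in\mathcal{N}}A=X$ and for each $A_1,A_2\in\mathcal{N}$ there is $A_3\in\mathcal{N}$ with $A_1\cup A_2\subseteq A_3$. $\mathcal{G}$ is the family of all lower semicontinuous functions $\varphi:Y\to[0,+\infty[$ with $\varphi^{-1}(0)=\{y_0\}$ such that $\inf_{Y\setminus V}\varphi>0$ for each neighbourhood $V$ of $y_0$. $\mathcal{H}$ is the family of all functions $\Psi:X\times\Lambda\to Y$ such that, for each $x\in X$, $\Psi(x,\cdot)$ is continuous, injective, open, and takes the value $y_0$ at a point $\lambda_x$, and the function $x\mapsto\lambda_x$ is not constant. $\mathcal{M}$ is the family of all functions $J:X\to\mathbb{R}$ whose set $M_J$ of global minima is non-empty. For $\varphi\in\mathcal{G}$, $\Psi\in\mathcal{H}$, $J\in\mathcal{M}$, $$\theta(\varphi,\Psi,J)=\inf\left\{\frac{J(x)-J(u)}{\varphi(\Psi(x,\lambda_u))}:(u,x)\in M_J\times X,\ \lambda_x\neq\lambda_u\right\}.$$ A function on a topological space is inf-compact if all its sublevel sets $\{\psi\leq r\}$ are compact. *)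

theory Defs
  imports "HOL-Analysis.Analysis"
begin

definition lsc_on :: "'a::topological_space set \<Rightarrow> ('a \<Rightarrow> real) \<Rightarrow> bool" where
  "lsc_on A f \<longleftrightarrow> (\<forall>r. openin (top_of_set A) {x \<in> A. r < f x})"

definition inf_compact_on :: "'a::topological_space set \<Rightarrow> ('a \<Rightarrow> real) \<Rightarrow> bool" where
  "inf_compact_on A f \<longleftrightarrow> (\<forall>r. compact {x \<in> A. f x \<le> r})"

definition filtering_cover :: "'a set set \<Rightarrow> bool" where
  "filtering_cover N \<longleftrightarrow> (\<forall>A\<in>N. A \<noteq> {}) \<and> \<Union>N = UNIV \<and>
     (\<forall>A1\<in>N. \<forall>A2\<in>N. \<exists>A3\<in>N. A1 \<union> A2 \<subseteq> A3)"

definition class_G :: "'y::topological_space \<Rightarrow> ('y \<Rightarrow> real) set" where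
  "class_G y0 = {\<phi>. (\<forall>y. 0 \<le> \<phi> y) \<and> lsc_on UNIV \<phi> \<and> \<phi> -` {0} = {y0} \<and>
      (\<forall>V. (\<exists>U. open U \<and> y0 \<in> U \<and> U \<subseteq> V) \<longrightarrow> (\<exists>c>0. \<forall>y\<in>-V. c \<le> \<phi> y))}"

definition class_H :: "'y::topological_space \<Rightarrow> ('x \<Rightarrow> 'l::topological_space \<Rightarrow> 'y) set" where
  "class_H y0 = {\<Psi>. (\<forall>x. continuous_on UNIV (\<Psi> x) \<and> inj (\<Psi> x) \<and>
        (\<forall>U. open U \<longrightarrow> open (\<Psi> x ` U)) \<and> y0 \<in> range (\<Psi> x)) \<and>
      (\<exists>x1 x2. (THE l. \<Psi> x1 l = y0) \<noteq> (THE l. \<Psi> x2 l = y0))}"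

definition lam :: "'y \<Rightarrow> ('x \<Rightarrow> 'l \<Rightarrow> 'y) \<Rightarrow> 'x \<Rightarrow> 'l" where
  "lam y0 \<Psi> x = (THE l. \<Psi> x l = y0)"

definition minima :: "('x \<Rightarrow> real) \<Rightarrow> 'x set" where
  "minima J = {u. \<forall>x. J u \<le> J x}"

definition class_M :: "('x \<Rightarrow> real) set" where
  "class_M = {J. minima J \<noteq> {}}"

definition theta :: "'y \<Rightarrow> ('y \<Rightarrow> real) \<Rightarrow> ('x \<Rightarrow> 'l \<Rightarrow> 'y) \<Rightarrow> ('x \<Rightarrow> real) \<Rightarrow> real" where
  "theta y0 \<phi> \<Psi> J = Inf {(J x - J u) / \<phi> (\<Psi> x (lam y0 \<Psi> u)) | u x.
       u \<in> minima J \<and> lam y0 \<Psi> x \<noteq> lam y0 \<Psi> u}"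

end

theory Submission
  imports Defs
begin

text \<open>Suppose that for every \<open>A \<in> \<N>\<close> and every \<open>\<lambda>\<close> in the convex hull of \<open>{\<lambda>\<^sub>x : x \<in> A}\<close> the
  function \<open>F x \<lambda> = J x - \<mu> \<phi> (\<Psi> x \<lambda>)\<close> had at most one minimum on \<open>A\<close>. Since \<open>\<mu> > \<theta>\<close>, there are a
  global minimum \<open>u\<close> of \<open>J\<close> and a point \<open>x\<^sub>0\<close> with \<open>J x\<^sub>0 - J u < \<mu> \<phi> (\<Psi> x\<^sub>0 \<lambda>\<^sub>u)\<close>; both lie in
  some \<open>A \<in> \<N>\<close>, and there is \<open>a < J u\<close> with \<open>min (F x\<^sub>0 \<lambda>) (F u \<lambda>) \<le> a\<close> for all \<open>\<lambda>\<close>, whereas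
  \<open>F y \<lambda>\<^sub>y = J y > a\<close> for all \<open>y\<close>. By inf-compactness finitely many \<open>\<lambda>\<^sub>y\<close> already witness
  the latter. On the simplex they span, \<open>F\<close> is concave in \<open>\<lambda>\<close> and has unique minimizers in \<open>x\<close>,
  so the minimizer depends continuously on \<open>\<lambda>\<close>; a KKM argument, based on Brouwer's theorem
  for cubes obtained from Kuhn's lemma, then yields \<open>x \<in> A\<close> with \<open>F x \<lambda>\<^sub>y \<le> a\<close> at all these
  points, a contradiction.\<close>

section \<open>Brouwer's fixed point theorem for cubes of varying dimension\<close>

text \<open>The dimension \<open>n\<close> arises from a compactness argument, so it cannot be a type: points of
  \<open>[0,1]\<^sup>n\<close> are functions \<open>nat \<Rightarrow> real\<close> vanishing from \<open>n\<close> on, and topology on them is expressed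
  by coordinatewise convergence of sequences.\<close>
definition cube :: "nat \<Rightarrow> (nat \<Rightarrow> real) set" where
  "cube n = {x. (\<forall>i<n. 0 \<le> x i \<and> x i \<le> 1) \<and> (\<forall>i\<ge>n. x i = 0)}"

definition coordwise_LIMSEQ :: "nat \<Rightarrow> (nat \<Rightarrow> nat \<Rightarrow> real) \<Rightarrow> (nat \<Rightarrow> real) \<Rightarrow> bool" where
  "coordwise_LIMSEQ n xs x \<longleftrightarrow> (\<forall>i<n. (\<lambda>k. xs k i) \<longlonglongrightarrow> x i)"

definition coordwise_continuous_on ::
    "(nat \<Rightarrow> real) set \<Rightarrow> nat \<Rightarrow> ((nat \<Rightarrow> real) \<Rightarrow> nat \<Rightarrow> real) \<Rightarrow> bool" where
  "coordwise_continuous_on S n f \<longleftrightarrow>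
     (\<forall>xs x. (\<forall>k. xs k \<in> S) \<longrightarrow> x \<in> S \<longrightarrow> coordwise_LIMSEQ n xs x \<longrightarrow>
        coordwise_LIMSEQ n (\<lambda>k. f (xs k)) (f x))"

definition coordwise_closed :: "nat \<Rightarrow> (nat \<Rightarrow> real) set \<Rightarrow> bool" where
  "coordwise_closed n S \<longleftrightarrow>
     (\<forall>xs x. (\<forall>k. xs k \<in> S) \<longrightarrow> x \<in> cube n \<longrightarrow> coordwise_LIMSEQ n xs x \<longrightarrow> x \<in> S)"

lemma LIMSEQ_by_comparison:
  fixes a b e :: "nat \<Rightarrow> real"
  assumes "\<And>k. \<bar>a k - b k\<bar> \<le> e k" "e \<longlonglongrightarrow> 0" "b \<longlonglongrightarrow> L"
  shows "a \<longlonglongrightarrow> L"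
  by (rule Lim_transform[OF assms(3) Lim_null_comparison[OF _ assms(2)]]) (use assms(1) in auto)

lemma LIMSEQ_one_over_Suc_subseq:
  "strict_mono r \<Longrightarrow> (\<lambda>k. 1 / real (Suc (r k))) \<longlonglongrightarrow> 0"
  using LIMSEQ_subseq_LIMSEQ[OF LIMSEQ_inverse_real_of_nat] by (simp add: o_def divide_inverse)

lemma cube_convergent_coords_subseq:
  fixes xs :: "nat \<Rightarrow> nat \<Rightarrow> real"
  assumes xs: "\<And>k. xs k \<in> cube n" and "m \<le> n"
  shows "\<exists>r. strict_mono r \<and> (\<forall>i<m. convergent (\<lambda>k. xs (r k) i))"
  using \<open>m \<le> n\<close>
proof (induction m)
  case 0
  show ?case by (rule exI[where x="\<lambda>k. k"]) (simp add: strict_mono_def)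
next
  case (Suc m)
  then obtain r where r: "strict_mono r" "\<forall>i<m. convergent (\<lambda>k. xs (r k) i)" by auto
  have "m < n" using Suc.prems by simp
  then have "\<bar>xs (r k) m\<bar> \<le> 1" for k
    using xs[of "r k"] unfolding cube_def by fastforce
  then have "bounded (range (\<lambda>k. xs (r k) m))"
    by (intro boundedI[of _ 1]) auto
  then obtain l r' where r': "strict_mono r'" "((\<lambda>k. xs (r k) m) \<circ> r') \<longlonglongrightarrow> l"
    using bounded_imp_convergent_subsequence by blast
  have conv: "convergent (\<lambda>k. xs (r (r' k)) i)" if i: "i < Suc m" for i
  proof (cases "i = m")
    case True
    then show ?thesis using r' by (auto simp: convergent_def o_def)
  next
    case False
    then obtain L where "(\<lambda>k. xs (r k) i) \<longlonglongrightarrow> L" using r i False by (auto simp: convergent_def less_Suc_eq)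
    from LIMSEQ_subseq_LIMSEQ[OF this r'(1)] show ?thesis by (auto simp: convergent_def o_def)
  qed
  show ?case
    using strict_mono_o[OF r(1) r'(1)] conv by (intro exI[of _ "r \<circ> r'"]) (simp add: o_def)
qed

lemma cube_Bolzano_Weierstrass:
  fixes xs :: "nat \<Rightarrow> nat \<Rightarrow> real"
  assumes xs: "\<And>k. xs k \<in> cube n"
  obtains r z where "strict_mono r" "z \<in> cube n" "coordwise_LIMSEQ n (xs \<circ> r) z"
proof -
  obtain r where r: "strict_mono r" "\<forall>i<n. convergent (\<lambda>k. xs (r k) i)"
    using cube_convergent_coords_subseq[of xs n n] xs by blast
  define z where "z i = (if i < n then lim (\<lambda>k. xs (r k) i) else 0)" for i
  have lim: "(\<lambda>k. xs (r k) i) \<longlonglongrightarrow> z i" if "i < n" for i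
    using r that by (simp add: z_def convergent_LIMSEQ_iff)
  have "z \<in> cube n"
    unfolding cube_def
  proof safe
    fix i assume i: "i < n"
    show "0 \<le> z i"
      by (rule LIMSEQ_le_const[OF lim[OF i]]) (use xs i in \<open>auto simp: cube_def\<close>)
    show "z i \<le> 1"
      by (rule LIMSEQ_le_const2[OF lim[OF i]]) (use xs i in \<open>auto simp: cube_def\<close>)
  qed (auto simp: z_def)
  moreover have "coordwise_LIMSEQ n (xs \<circ> r) z"
    using lim by (simp add: coordwise_LIMSEQ_def o_def)
  ultimately show ?thesis using that r(1) by blast
qed

definition grid_point :: "nat \<Rightarrow> nat \<Rightarrow> (nat \<Rightarrow> nat) \<Rightarrow> nat \<Rightarrow> real" where
  "grid_point n p y = (\<lambda>i. if i < n then real (y i) / real p else 0)"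

lemma grid_point_in_cube: "0 < p \<Longrightarrow> \<forall>i<n. y i \<le> p \<Longrightarrow> grid_point n p y \<in> cube n"
  by (auto simp: cube_def grid_point_def divide_le_eq_1)

lemma grid_point_neighbour:
  assumes "0 < p" and y: "q j \<le> y j" "y j \<le> q j + 1" and "j < n"
  shows "\<bar>grid_point n p y j - grid_point n p q j\<bar> \<le> 1 / real p"
proof -
  have "grid_point n p y j - grid_point n p q j = (real (y j) - real (q j)) / real p"
    using \<open>j < n\<close> by (simp add: grid_point_def diff_divide_distrib)
  moreover have "0 \<le> real (y j) - real (q j)" "real (y j) - real (q j) \<le> 1" using y by auto
  ultimately show ?thesis using \<open>0 < p\<close> by (simp add: divide_le_cancel)
qed

text \<open>Kuhn's lemma on the grid of mesh \<open>1/p\<close>, labelled by membership in \<open>Z i\<close>, yields a cell that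
  meets both \<open>Z i\<close> and \<open>Q i\<close> for every coordinate \<open>i\<close>.\<close>
lemma poincare_miranda_grid:
  fixes Z Q :: "nat \<Rightarrow> (nat \<Rightarrow> real) set"
  assumes cover: "\<And>i. i < n \<Longrightarrow> cube n \<subseteq> Z i \<union> Q i"
    and face0: "\<And>i x. i < n \<Longrightarrow> x \<in> cube n \<Longrightarrow> x i = 0 \<Longrightarrow> x \<in> Z i"
    and face1: "\<And>i x. i < n \<Longrightarrow> x \<in> cube n \<Longrightarrow> x i = 1 \<Longrightarrow> x \<in> Q i"
    and p: "0 < p"
  shows "\<exists>z\<in>cube n. \<forall>i<n. \<exists>a\<in>Z i \<inter> cube n. \<exists>b\<in>Q i \<inter> cube n.
           \<forall>j<n. \<bar>a j - z j\<bar> \<le> 1 / real p \<and> \<bar>b j - z j\<bar> \<le> 1 / real p"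
proof -
  let ?emb = "grid_point n p"
  define label where "label y i = (if y i = 0 then 0 else if y i = p then 1
      else if ?emb y \<in> Z i then 0 else (1::nat))" for y i
  obtain q where q: "\<forall>i<n. q i < p"
    "\<forall>i<n. \<exists>r s. (\<forall>j<n. q j \<le> r j \<and> r j \<le> q j + 1) \<and> (\<forall>j<n. q j \<le> s j \<and> s j \<le> q j + 1) \<and>
       label r i \<noteq> label s i"
    by (rule kuhn_lemma[OF p, of n label]) (use p in \<open>auto simp: label_def\<close>)
  define z where "z = ?emb q"
  have "z \<in> cube n" unfolding z_def using q(1) p by (intro grid_point_in_cube) (auto simp: less_imp_le)
  have cell: "?emb y \<in> cube n \<and> (\<forall>j<n. \<bar>?emb y j - z j\<bar> \<le> 1 / real p)"
    if y: "\<forall>j<n. q j \<le> y j \<and> y j \<le> q j + 1" for y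
  proof
    have "\<forall>j<n. y j \<le> p" using y q(1) by (metis Suc_eq_plus1 Suc_leI le_trans)
    then show "?emb y \<in> cube n" using p by (rule grid_point_in_cube[rotated])
    show "\<forall>j<n. \<bar>?emb y j - z j\<bar> \<le> 1 / real p"
      using y p unfolding z_def by (auto intro: grid_point_neighbour)
  qed
  have label0: "?emb y \<in> Z i" if "i < n" "?emb y \<in> cube n" "label y i = 0" for y i
  proof (cases "y i = 0")
    case True
    then show ?thesis using face0[of i "?emb y"] that by (simp add: grid_point_def)
  next
    case False
    then show ?thesis using that by (auto simp: label_def split: if_splits)
  qed
  have label1: "?emb y \<in> Q i" if "i < n" "?emb y \<in> cube n" "label y i \<noteq> 0" for y i
  proof (cases "y i = p")
    case True
    then show ?thesis using that p face1[of i "?emb y"] by (simp add: grid_point_def)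
  next
    case False
    then have "?emb y \<notin> Z i" using that by (auto simp: label_def split: if_splits)
    then show ?thesis using cover[OF that(1)] that(2) by blast
  qed
  have "\<exists>a\<in>Z i \<inter> cube n. \<exists>b\<in>Q i \<inter> cube n. \<forall>j<n. \<bar>a j - z j\<bar> \<le> 1 / real p \<and> \<bar>b j - z j\<bar> \<le> 1 / real p"
    if i: "i < n" for i
  proof -
    obtain r s where rs: "\<forall>j<n. q j \<le> r j \<and> r j \<le> q j + 1" "\<forall>j<n. q j \<le> s j \<and> s j \<le> q j + 1"
      "label r i \<noteq> label s i" using q(2) i by blast
    have "label r i \<le> 1" "label s i \<le> 1" by (simp_all add: label_def)
    then have "label r i = 0 \<and> label s i \<noteq> 0 \<or> label s i = 0 \<and> label r i \<noteq> 0"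
      using rs(3) by linarith
    then show ?thesis using label0[OF i] label1[OF i] cell[OF rs(1)] cell[OF rs(2)] by blast
  qed
  then show ?thesis using \<open>z \<in> cube n\<close> by blast
qed

lemma poincare_miranda_cube:
  fixes Z Q :: "nat \<Rightarrow> (nat \<Rightarrow> real) set"
  assumes closedZ: "\<And>i. i < n \<Longrightarrow> coordwise_closed n (Z i)"
    and closedQ: "\<And>i. i < n \<Longrightarrow> coordwise_closed n (Q i)"
    and cover: "\<And>i. i < n \<Longrightarrow> cube n \<subseteq> Z i \<union> Q i"
    and face0: "\<And>i x. i < n \<Longrightarrow> x \<in> cube n \<Longrightarrow> x i = 0 \<Longrightarrow> x \<in> Z i"
    and face1: "\<And>i x. i < n \<Longrightarrow> x \<in> cube n \<Longrightarrow> x i = 1 \<Longrightarrow> x \<in> Q i"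
  shows "\<exists>x\<in>cube n. \<forall>i<n. x \<in> Z i \<and> x \<in> Q i"
proof -
  have "\<exists>z\<in>cube n. \<forall>i<n. \<exists>a\<in>Z i \<inter> cube n. \<exists>b\<in>Q i \<inter> cube n.
      \<forall>j<n. \<bar>a j - z j\<bar> \<le> 1 / real (Suc k) \<and> \<bar>b j - z j\<bar> \<le> 1 / real (Suc k)" for k
    by (rule poincare_miranda_grid) (use cover face0 face1 in auto)
  then obtain z a b where z: "\<And>k. z k \<in> cube n"
    and ab: "\<And>k i. i < n \<Longrightarrow> a k i \<in> Z i \<inter> cube n \<and> b k i \<in> Q i \<inter> cube n \<and>
      (\<forall>j<n. \<bar>a k i j - z k j\<bar> \<le> 1 / real (Suc k) \<and> \<bar>b k i j - z k j\<bar> \<le> 1 / real (Suc k))"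
    by metis
  obtain r x where r: "strict_mono r" and x: "x \<in> cube n" and lim: "coordwise_LIMSEQ n (z \<circ> r) x"
    using cube_Bolzano_Weierstrass[of z n] z by blast
  have "x \<in> Z i \<and> x \<in> Q i" if i: "i < n" for i
  proof -
    have "(\<lambda>k. a (r k) i j) \<longlonglongrightarrow> x j \<and> (\<lambda>k. b (r k) i j) \<longlonglongrightarrow> x j" if j: "j < n" for j
    proof -
      have z: "(\<lambda>k. z (r k) j) \<longlonglongrightarrow> x j" using lim j by (simp add: coordwise_LIMSEQ_def o_def)
      have "\<bar>a (r k) i j - z (r k) j\<bar> \<le> 1 / real (Suc (r k))" "\<bar>b (r k) i j - z (r k) j\<bar> \<le> 1 / real (Suc (r k))"
        for k using ab[OF i, of "r k"] j by auto
      from this[THEN LIMSEQ_by_comparison, OF LIMSEQ_one_over_Suc_subseq[OF r] z] show ?thesis ..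
    qed
    then have "coordwise_LIMSEQ n (\<lambda>k. a (r k) i) x" "coordwise_LIMSEQ n (\<lambda>k. b (r k) i) x"
      by (simp_all add: coordwise_LIMSEQ_def)
    moreover have "\<forall>k. a (r k) i \<in> Z i" "\<forall>k. b (r k) i \<in> Q i" using ab[OF i] by auto
    ultimately show ?thesis
      using closedZ[OF i] closedQ[OF i] x unfolding coordwise_closed_def by meson
  qed
  then show ?thesis using x by blast
qed

lemma coordwise_closed_le:
  assumes "coordwise_continuous_on (cube n) n f" and "i < n" and "j < n"
  shows "coordwise_closed n {x \<in> cube n. x i \<le> f x j}"
    and "coordwise_closed n {x \<in> cube n. f x j \<le> x i}"
proof -
  have lim: "(\<lambda>k. xs k i) \<longlonglongrightarrow> x i" "(\<lambda>k. f (xs k) j) \<longlonglongrightarrow> f x j"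
    if "\<forall>k. xs k \<in> cube n" "x \<in> cube n" "coordwise_LIMSEQ n xs x" for xs x
    using assms that unfolding coordwise_continuous_on_def coordwise_LIMSEQ_def by blast+
  show "coordwise_closed n {x \<in> cube n. x i \<le> f x j}"
    unfolding coordwise_closed_def
  proof (intro allI impI)
    fix xs x assume xs: "\<forall>k. xs k \<in> {x \<in> cube n. x i \<le> f x j}" and x: "x \<in> cube n"
      and "coordwise_LIMSEQ n xs x"
    then have "(\<lambda>k. xs k i) \<longlonglongrightarrow> x i" "(\<lambda>k. f (xs k) j) \<longlonglongrightarrow> f x j" using lim by auto
    from LIMSEQ_le[OF this] show "x \<in> {x \<in> cube n. x i \<le> f x j}" using xs x by auto
  qed
  show "coordwise_closed n {x \<in> cube n. f x j \<le> x i}"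
    unfolding coordwise_closed_def
  proof (intro allI impI)
    fix xs x assume xs: "\<forall>k. xs k \<in> {x \<in> cube n. f x j \<le> x i}" and x: "x \<in> cube n"
      and "coordwise_LIMSEQ n xs x"
    then have "(\<lambda>k. f (xs k) j) \<longlonglongrightarrow> f x j" "(\<lambda>k. xs k i) \<longlonglongrightarrow> x i" using lim by auto
    from LIMSEQ_le[OF this] show "x \<in> {x \<in> cube n. f x j \<le> x i}" using xs x by auto
  qed
qed

theorem brouwer_cube_coordwise:
  assumes maps: "\<And>x. x \<in> cube n \<Longrightarrow> f x \<in> cube n"
    and cont: "coordwise_continuous_on (cube n) n f"
  shows "\<exists>x\<in>cube n. f x = x"
proof -
  have "\<exists>x\<in>cube n. \<forall>i<n. x \<in> {x \<in> cube n. x i \<le> f x i} \<and> x \<in> {x \<in> cube n. f x i \<le> x i}"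
  proof (rule poincare_miranda_cube)
    show "coordwise_closed n {x \<in> cube n. x i \<le> f x i}" "coordwise_closed n {x \<in> cube n. f x i \<le> x i}"
      if "i < n" for i
      using coordwise_closed_le[OF cont that that] by blast+
  qed (use maps in \<open>auto simp: cube_def\<close>)
  then obtain x where x: "x \<in> cube n" "\<forall>i<n. f x i = x i" by force
  have "f x = x"
  proof
    fix i show "f x i = x i"
      using x maps[OF x(1)] by (cases "i < n") (auto simp: cube_def)
  qed
  then show ?thesis using x(1) by blast
qed

section \<open>The standard simplex and the KKM lemma\<close>

text \<open>A point \<open>t\<close> of \<open>std_simplex n\<close> encodes the \<open>n + 1\<close> barycentric weights
  \<open>t 0, \<dots>, t (n - 1)\<close> and \<open>1 - (t 0 + \<dots> + t (n - 1))\<close>.\<close>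
definition std_simplex :: "nat \<Rightarrow> (nat \<Rightarrow> real) set" where
  "std_simplex n = {t \<in> cube n. (\<Sum>i<n. t i) \<le> 1}"

definition simplex_weight :: "nat \<Rightarrow> (nat \<Rightarrow> real) \<Rightarrow> nat \<Rightarrow> real" where
  "simplex_weight n t j = (if j < n then t j else 1 - (\<Sum>i<n. t i))"

lemma sum_atMost_eq_sum_lessThan_plus:
  "(\<Sum>j\<le>n. g j) = (\<Sum>j<n. g j) + (g n :: 'a::comm_monoid_add)" for n :: nat
  by (metis sum.lessThan_Suc lessThan_Suc_atMost)

lemma simplex_weight_nonneg: "t \<in> std_simplex n \<Longrightarrow> j \<le> n \<Longrightarrow> 0 \<le> simplex_weight n t j"
  by (auto simp: simplex_weight_def std_simplex_def cube_def)

lemma sum_simplex_weight: "(\<Sum>j\<le>n. simplex_weight n t j) = 1"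
  by (simp add: sum_atMost_eq_sum_lessThan_plus simplex_weight_def)

lemma std_simplex_iff_simplex_weight_nonneg:
  "t \<in> std_simplex n \<longleftrightarrow> (\<forall>i\<ge>n. t i = 0) \<and> (\<forall>j\<le>n. 0 \<le> simplex_weight n t j)"
proof
  assume "t \<in> std_simplex n"
  then show "(\<forall>i\<ge>n. t i = 0) \<and> (\<forall>j\<le>n. 0 \<le> simplex_weight n t j)"
    by (auto simp: std_simplex_def cube_def simplex_weight_nonneg)
next
  assume t: "(\<forall>i\<ge>n. t i = 0) \<and> (\<forall>j\<le>n. 0 \<le> simplex_weight n t j)"
  then have nonneg: "0 \<le> t i" if "i < n" for i
    using that by (auto simp: simplex_weight_def dest!: spec[of _ i])
  have sum: "(\<Sum>i<n. t i) \<le> 1" using t by (auto simp: simplex_weight_def dest!: spec[of _ n])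
  have "t i \<le> 1" if "i < n" for i
    using member_le_sum[of i "{..<n}" t] nonneg sum that by fastforce
  then show "t \<in> std_simplex n" using t nonneg sum by (simp add: std_simplex_def cube_def)
qed

lemma simplex_weight_LIMSEQ:
  assumes "coordwise_LIMSEQ n ts t" "j \<le> n"
  shows "(\<lambda>k. simplex_weight n (ts k) j) \<longlonglongrightarrow> simplex_weight n t j"
proof (cases "j < n")
  case True
  then show ?thesis using assms by (simp add: simplex_weight_def coordwise_LIMSEQ_def)
next
  case False
  have "(\<lambda>k. 1 - (\<Sum>i<n. ts k i)) \<longlonglongrightarrow> 1 - (\<Sum>i<n. t i)"
    using assms by (intro tendsto_intros) (auto simp: coordwise_LIMSEQ_def)
  then show ?thesis using False by (simp add: simplex_weight_def)
qed

lemma simplex_weight_normalized: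
  assumes "(\<Sum>j\<le>n. d j) \<noteq> 0" and "j \<le> n"
  shows "simplex_weight n (\<lambda>i. if i < n then d i / (\<Sum>j\<le>n. d j) else 0) j = d j / (\<Sum>j\<le>n. d j)"
proof (cases "j < n")
  case False
  then have "j = n" using assms(2) by simp
  have "(\<Sum>i<n. d i / (\<Sum>j\<le>n. d j)) = (\<Sum>i<n. d i) / (\<Sum>j\<le>n. d j)"
    by (simp add: sum_divide_distrib)
  then show ?thesis
    using assms(1) \<open>j = n\<close> sum_atMost_eq_sum_lessThan_plus[of d n]
    by (simp add: simplex_weight_def field_simps)
qed (simp add: simplex_weight_def)

lemma coordwise_closed_std_simplex: "coordwise_closed n (std_simplex n)"
  unfolding coordwise_closed_def
proof (intro allI impI)
  fix ts t assume ts: "\<forall>k. ts k \<in> std_simplex n" and t: "t \<in> cube n" and "coordwise_LIMSEQ n ts t"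
  then have "(\<lambda>k. \<Sum>i<n. ts k i) \<longlonglongrightarrow> (\<Sum>i<n. t i)"
    by (intro tendsto_intros) (auto simp: coordwise_LIMSEQ_def)
  then have "(\<Sum>i<n. t i) \<le> 1"
    by (rule LIMSEQ_le_const2) (use ts in \<open>auto simp: std_simplex_def\<close>)
  then show "t \<in> std_simplex n" using t by (simp add: std_simplex_def)
qed

definition simplex_retraction :: "nat \<Rightarrow> (nat \<Rightarrow> real) \<Rightarrow> nat \<Rightarrow> real" where
  "simplex_retraction n x = (\<lambda>i. if i < n then x i / max 1 (\<Sum>i<n. x i) else 0)"

lemma simplex_retraction_in_std_simplex:
  assumes x: "x \<in> cube n"
  shows "simplex_retraction n x \<in> std_simplex n"
proof -
  have xi: "0 \<le> x i" "x i \<le> (\<Sum>i<n. x i)" if "i < n" for i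
    using x that by (auto simp: cube_def intro!: member_le_sum)
  have "(\<Sum>i<n. simplex_retraction n x i) = (\<Sum>i<n. x i) / max 1 (\<Sum>i<n. x i)"
    by (simp add: simplex_retraction_def sum_divide_distrib)
  also have "\<dots> \<le> 1" by (simp add: pos_divide_le_eq)
  finally show ?thesis
    using xi unfolding std_simplex_def cube_def simplex_retraction_def
    by (auto simp: pos_divide_le_eq intro: order_trans[OF _ max.cobounded2])
qed

lemma simplex_retraction_id: "t \<in> std_simplex n \<Longrightarrow> simplex_retraction n t = t"
  by (rule ext) (auto simp: simplex_retraction_def std_simplex_def cube_def max_def)

lemma simplex_retraction_LIMSEQ:
  assumes "coordwise_LIMSEQ n xs x"
  shows "coordwise_LIMSEQ n (\<lambda>k. simplex_retraction n (xs k)) (simplex_retraction n x)"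
  using assms unfolding coordwise_LIMSEQ_def simplex_retraction_def
  by (auto intro!: tendsto_divide tendsto_max tendsto_sum)

theorem brouwer_std_simplex:
  assumes maps: "\<And>t. t \<in> std_simplex n \<Longrightarrow> f t \<in> std_simplex n"
    and cont: "coordwise_continuous_on (std_simplex n) n f"
  shows "\<exists>t\<in>std_simplex n. f t = t"
proof -
  let ?g = "\<lambda>x. f (simplex_retraction n x)"
  have std_simplex_cube: "std_simplex n \<subseteq> cube n" by (auto simp: std_simplex_def)
  have "\<exists>x\<in>cube n. ?g x = x"
  proof (rule brouwer_cube_coordwise)
    show "?g x \<in> cube n" if "x \<in> cube n" for x
      using maps simplex_retraction_in_std_simplex that std_simplex_cube by blast
    show "coordwise_continuous_on (cube n) n ?g"
      unfolding coordwise_continuous_on_def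
    proof (intro allI impI)
      fix xs x assume "\<forall>k. xs k \<in> cube n" "x \<in> cube n" and lim: "coordwise_LIMSEQ n xs x"
      then show "coordwise_LIMSEQ n (\<lambda>k. ?g (xs k)) (?g x)"
        using cont[unfolded coordwise_continuous_on_def, rule_format, OF _ _ simplex_retraction_LIMSEQ[OF lim]]
          simplex_retraction_in_std_simplex by blast
    qed
  qed
  then obtain x where x: "x \<in> cube n" "?g x = x" by blast
  then have "x \<in> std_simplex n" using maps simplex_retraction_in_std_simplex by metis
  then show ?thesis using x(2) simplex_retraction_id by metis
qed

definition l1_dist :: "nat \<Rightarrow> (nat \<Rightarrow> real) \<Rightarrow> (nat \<Rightarrow> real) \<Rightarrow> real" where
  "l1_dist n s t = (\<Sum>i<n. \<bar>s i - t i\<bar>)"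

text \<open>The value \<open>1\<close> for the empty set keeps the distance positive off every closed set.\<close>
definition l1_setdist :: "nat \<Rightarrow> (nat \<Rightarrow> real) set \<Rightarrow> (nat \<Rightarrow> real) \<Rightarrow> real" where
  "l1_setdist n T t = (if T = {} then 1 else Inf (l1_dist n t ` T))"

lemma l1_dist_nonneg: "0 \<le> l1_dist n s t"
  by (simp add: l1_dist_def sum_nonneg)

lemma l1_dist_commute: "l1_dist n s t = l1_dist n t s"
  by (simp add: l1_dist_def abs_minus_commute)

lemma l1_dist_triangle: "l1_dist n s t \<le> l1_dist n s u + l1_dist n u t"
  unfolding l1_dist_def sum.distrib[symmetric] by (rule sum_mono) linarith

lemma abs_le_l1_dist: "i < n \<Longrightarrow> \<bar>s i - t i\<bar> \<le> l1_dist n s t"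
  unfolding l1_dist_def by (rule member_le_sum) auto

lemma l1_dist_LIMSEQ_0:
  assumes "coordwise_LIMSEQ n ts t"
  shows "(\<lambda>k. l1_dist n (ts k) t) \<longlonglongrightarrow> 0"
proof -
  have "(\<lambda>k. \<Sum>i<n. \<bar>ts k i - t i\<bar>) \<longlonglongrightarrow> (\<Sum>i<n. \<bar>t i - t i\<bar>)"
    using assms by (intro tendsto_sum tendsto_rabs tendsto_diff tendsto_const) (auto simp: coordwise_LIMSEQ_def)
  then show ?thesis by (simp add: l1_dist_def)
qed

lemma l1_setdist_nonneg: "0 \<le> l1_setdist n T t"
  unfolding l1_setdist_def by (auto intro!: cInf_greatest simp: l1_dist_nonneg)

lemma l1_setdist_le: "s \<in> T \<Longrightarrow> l1_setdist n T t \<le> l1_dist n t s"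
  unfolding l1_setdist_def by (auto intro!: cInf_lower bdd_belowI[of _ 0] simp: l1_dist_nonneg)

lemma l1_setdist_eq_0: "t \<in> T \<Longrightarrow> l1_setdist n T t = 0"
  using l1_setdist_le[of t T n t] l1_setdist_nonneg[of n T t] by (simp add: l1_dist_def)

lemma l1_setdist_lipschitz: "l1_setdist n T t \<le> l1_setdist n T t' + l1_dist n t t'"
proof (cases "T = {}")
  case True
  then show ?thesis by (simp add: l1_setdist_def l1_dist_nonneg)
next
  case False
  have "l1_setdist n T t - l1_dist n t t' \<le> Inf (l1_dist n t' ` T)"
  proof (rule cInf_greatest)
    fix d assume "d \<in> l1_dist n t' ` T"
    then obtain s where s: "s \<in> T" "d = l1_dist n t' s" by auto
    have "l1_setdist n T t \<le> l1_dist n t s" by (rule l1_setdist_le[OF s(1)])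
    also have "\<dots> \<le> l1_dist n t t' + l1_dist n t' s" by (rule l1_dist_triangle)
    finally show "l1_setdist n T t - l1_dist n t t' \<le> d" using s by simp
  qed (use False in auto)
  then show ?thesis using False by (simp add: l1_setdist_def)
qed

lemma l1_setdist_LIMSEQ:
  assumes "coordwise_LIMSEQ n ts t"
  shows "(\<lambda>k. l1_setdist n T (ts k)) \<longlonglongrightarrow> l1_setdist n T t"
proof (rule LIMSEQ_by_comparison[OF _ l1_dist_LIMSEQ_0[OF assms]])
  show "\<bar>l1_setdist n T (ts k) - l1_setdist n T t\<bar> \<le> l1_dist n (ts k) t" for k
    using l1_setdist_lipschitz[of n T "ts k" t] l1_setdist_lipschitz[of n T t "ts k"]
      l1_dist_commute[of n t "ts k"] by linarith
qed simp

lemma l1_setdist_pos: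
  assumes closed: "coordwise_closed n T" and t: "t \<in> cube n" "t \<notin> T"
  shows "0 < l1_setdist n T t"
proof (rule ccontr)
  assume "\<not> 0 < l1_setdist n T t"
  then have T: "T \<noteq> {}" and inf0: "Inf (l1_dist n t ` T) \<le> 0"
    by (auto simp: l1_setdist_def split: if_splits)
  have "\<exists>s\<in>T. l1_dist n t s < 1 / real (Suc k)" for k
  proof -
    have "0 < 1 / real (Suc k)" by simp
    then have "Inf (l1_dist n t ` T) < 1 / real (Suc k)" using inf0 by linarith
    then show ?thesis
      using T by (subst (asm) cInf_less_iff) (auto intro: bdd_belowI[of _ 0] simp: l1_dist_nonneg)
  qed
  then obtain ss where ss: "\<And>k. ss k \<in> T" "\<And>k. l1_dist n t (ss k) < 1 / real (Suc k)" by metis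
  have "(\<lambda>k. ss k i) \<longlonglongrightarrow> t i" if i: "i < n" for i
  proof (rule LIMSEQ_by_comparison[OF _ LIMSEQ_one_over_Suc_subseq[of "\<lambda>k. k"]])
    show "\<bar>ss k i - t i\<bar> \<le> 1 / real (Suc k)" for k
      using abs_le_l1_dist[OF i, of t "ss k"] ss(2)[of k] by (simp add: abs_minus_commute)
  qed (simp_all add: strict_mono_def)
  then have "t \<in> T"
    using closed t(1) ss(1) unfolding coordwise_closed_def coordwise_LIMSEQ_def by blast
  with t(2) show False by blast
qed

text \<open>The normalised distances to the sets \<open>T j\<close> define a continuous self-map of the simplex;
  at a fixed point, every positive weight is a positive distance.\<close>
theorem KKM_std_simplex:
  assumes closed: "\<And>j. j \<le> n \<Longrightarrow> coordwise_closed n (T j)"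
    and no_common_point: "\<And>t. t \<in> std_simplex n \<Longrightarrow> \<exists>j\<le>n. t \<notin> T j"
  shows "\<exists>t\<in>std_simplex n. \<forall>j\<le>n. 0 < simplex_weight n t j \<longrightarrow> t \<notin> T j"
proof -
  define S where "S t = (\<Sum>j\<le>n. l1_setdist n (T j) t)" for t
  define G where "G t = (\<lambda>i. if i < n then l1_setdist n (T i) t / S t else 0)" for t
  have S_pos: "0 < S t" if t: "t \<in> std_simplex n" for t
  proof -
    obtain j where j: "j \<le> n" "t \<notin> T j" using no_common_point[OF t] by blast
    have "0 < l1_setdist n (T j) t"
      using l1_setdist_pos[OF closed[OF j(1)] _ j(2)] t by (simp add: std_simplex_def)
    then show ?thesis
      unfolding S_def by (intro sum_pos2[of _ j]) (auto simp: l1_setdist_nonneg j)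
  qed
  have weight_G: "simplex_weight n (G t) j = l1_setdist n (T j) t / S t"
    if "t \<in> std_simplex n" "j \<le> n" for t j
  proof -
    have "(\<Sum>j\<le>n. l1_setdist n (T j) t) \<noteq> 0" using S_pos[OF that(1)] by (simp add: S_def)
    from simplex_weight_normalized[OF this that(2)] show ?thesis unfolding G_def S_def .
  qed
  have "\<exists>t\<in>std_simplex n. G t = t"
  proof (rule brouwer_std_simplex)
    fix t assume t: "t \<in> std_simplex n"
    have "0 \<le> simplex_weight n (G t) j" if "j \<le> n" for j
      using weight_G[OF t that] S_pos[OF t] by (simp add: l1_setdist_nonneg)
    then show "G t \<in> std_simplex n"
      by (simp add: std_simplex_iff_simplex_weight_nonneg G_def)
  next
    show "coordwise_continuous_on (std_simplex n) n G"
      unfolding coordwise_continuous_on_def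
    proof (intro allI impI)
      fix ts :: "nat \<Rightarrow> nat \<Rightarrow> real" and t assume t: "t \<in> std_simplex n" and lim: "coordwise_LIMSEQ n ts t"
      show "coordwise_LIMSEQ n (\<lambda>k. G (ts k)) (G t)"
        unfolding coordwise_LIMSEQ_def G_def S_def using S_pos[OF t]
        by (auto intro!: tendsto_divide tendsto_sum l1_setdist_LIMSEQ[OF lim] simp: S_def)
    qed
  qed
  then obtain t where t: "t \<in> std_simplex n" "G t = t" by blast
  have "t \<notin> T j" if "j \<le> n" "0 < simplex_weight n t j" for j
    using that weight_G[OF t(1) that(1)] l1_setdist_eq_0[of t "T j" n] t(2) by auto
  then show ?thesis using t(1) by blast
qed

section \<open>A minimax inequality\<close>

lemma tvs_tendsto_add:
  fixes f g :: "'b \<Rightarrow> 'l::{real_vector,topological_space}"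
  assumes add: "continuous_on UNIV (\<lambda>p::'l \<times> 'l. fst p + snd p)"
    and "(f \<longlongrightarrow> a) F" "(g \<longlongrightarrow> b) F"
  shows "((\<lambda>x. f x + g x) \<longlongrightarrow> a + b) F"
  using continuous_on_tendsto_compose[OF add tendsto_Pair[OF assms(2,3)]] by simp

lemma tvs_tendsto_scaleR_const:
  fixes f :: "'b \<Rightarrow> real" and v :: "'l::{real_vector,topological_space}"
  assumes scale: "continuous_on UNIV (\<lambda>p::real \<times> 'l. fst p *\<^sub>R snd p)"
    and "(f \<longlongrightarrow> a) F"
  shows "((\<lambda>x. f x *\<^sub>R v) \<longlongrightarrow> a *\<^sub>R v) F"
  using continuous_on_tendsto_compose[OF scale tendsto_Pair[OF assms(2) tendsto_const]] by simp

lemma tvs_tendsto_sum: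
  fixes g :: "'b \<Rightarrow> 'i \<Rightarrow> 'l::{real_vector,topological_space}"
  assumes add: "continuous_on UNIV (\<lambda>p::'l \<times> 'l. fst p + snd p)"
    and "finite I" "\<And>j. j \<in> I \<Longrightarrow> ((\<lambda>x. g x j) \<longlongrightarrow> L j) F"
  shows "((\<lambda>x. \<Sum>j\<in>I. g x j) \<longlongrightarrow> (\<Sum>j\<in>I. L j)) F"
  using assms(2,3)
proof (induction I rule: finite_induct)
  case (insert j I)
  then show ?case by (simp add: tvs_tendsto_add[OF add])
qed simp

definition simplex_point :: "nat \<Rightarrow> (nat \<Rightarrow> 'l::real_vector) \<Rightarrow> (nat \<Rightarrow> real) \<Rightarrow> 'l" where
  "simplex_point n P t = (\<Sum>j\<le>n. simplex_weight n t j *\<^sub>R P j)"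

lemma simplex_point_in_convex_hull:
  "t \<in> std_simplex n \<Longrightarrow> simplex_point n P t \<in> convex hull (P ` {..n})"
  unfolding simplex_point_def
  by (rule convex_sum) (auto simp: sum_simplex_weight simplex_weight_nonneg intro: hull_inc)

lemma simplex_point_LIMSEQ:
  fixes P :: "nat \<Rightarrow> 'l::{real_vector,topological_space}"
  assumes add: "continuous_on UNIV (\<lambda>p::'l \<times> 'l. fst p + snd p)"
    and scale: "continuous_on UNIV (\<lambda>p::real \<times> 'l. fst p *\<^sub>R snd p)"
    and lim: "coordwise_LIMSEQ n ts t"
  shows "(\<lambda>k. simplex_point n P (ts k)) \<longlonglongrightarrow> simplex_point n P t"
  unfolding simplex_point_def
  by (rule tvs_tendsto_sum[OF add])
    (auto intro!: tvs_tendsto_scaleR_const[OF scale] simplex_weight_LIMSEQ[OF lim])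

lemma convex_on_simplex_point:
  fixes g :: "'l::real_vector \<Rightarrow> real"
  assumes "convex_on UNIV g" "t \<in> std_simplex n"
  shows "g (simplex_point n P t) \<le> (\<Sum>j\<le>n. simplex_weight n t j * g (P j))"
  unfolding simplex_point_def
  by (rule convex_on_sum[OF _ _ assms(1)]) (use assms(2) in \<open>auto simp: sum_simplex_weight simplex_weight_nonneg\<close>)

text \<open>If the weights of \<open>s\<close> dominate \<open>1 - e\<close> times those of \<open>t\<close>, the point of \<open>s\<close> is a
  convex combination of the point of \<open>t\<close> (weight \<open>1 - e\<close>) and a point of the hull (weight \<open>e\<close>).\<close>
lemma convex_on_simplex_point_perturbed:
  fixes g :: "'l::real_vector \<Rightarrow> real"
  assumes g: "convex_on UNIV g" and e: "0 < e" "e \<le> 1"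
    and dominates: "\<And>j. j \<le> n \<Longrightarrow> (1 - e) * simplex_weight n t j \<le> simplex_weight n s j"
    and bound: "\<And>j. j \<le> n \<Longrightarrow> g (P j) \<le> B"
  shows "g (simplex_point n P s) \<le> (1 - e) * g (simplex_point n P t) + e * B"
proof -
  define v where "v j = (simplex_weight n s j - (1 - e) * simplex_weight n t j) / e" for j
  have v_nonneg: "0 \<le> v j" if "j \<le> n" for j using dominates[OF that] e by (simp add: v_def)
  have v_sum: "(\<Sum>j\<le>n. v j) = 1"
    using e by (simp add: v_def sum_divide_distrib[symmetric] sum_subtractf
        sum_distrib_left[symmetric] sum_simplex_weight)
  define y where "y = (\<Sum>j\<le>n. v j *\<^sub>R P j)"
  have "(1 - e) *\<^sub>R simplex_point n P t + e *\<^sub>R y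
      = (\<Sum>j\<le>n. ((1 - e) * simplex_weight n t j + e * v j) *\<^sub>R P j)"
    by (simp add: simplex_point_def y_def scaleR_sum_right scaleR_add_left sum.distrib)
  also have "\<dots> = simplex_point n P s"
    using e by (simp add: v_def simplex_point_def)
  finally have split: "simplex_point n P s = (1 - e) *\<^sub>R simplex_point n P t + e *\<^sub>R y" ..
  have "g y \<le> (\<Sum>j\<le>n. v j * g (P j))"
    unfolding y_def by (rule convex_on_sum[OF _ _ g]) (auto simp: v_sum v_nonneg)
  also have "\<dots> \<le> (\<Sum>j\<le>n. v j * B)" by (intro sum_mono mult_left_mono bound v_nonneg) auto
  also have "\<dots> = B" by (simp add: sum_distrib_right[symmetric] v_sum)
  finally have "g y \<le> B" .
  have "g (simplex_point n P s) \<le> (1 - e) * g (simplex_point n P t) + e * g y"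
    unfolding split by (rule convex_onD[OF g]) (use e in auto)
  moreover have "e * g y \<le> e * B" using \<open>g y \<le> B\<close> e by simp
  ultimately show ?thesis by linarith
qed

lemma eventually_simplex_weight_ge:
  assumes t: "t \<in> std_simplex n" and lim: "coordwise_LIMSEQ n ts t"
    and ts: "\<And>k. ts k \<in> std_simplex n" and e: "0 < e"
  shows "eventually (\<lambda>k. \<forall>j\<le>n. (1 - e) * simplex_weight n t j \<le> simplex_weight n (ts k) j) sequentially"
proof -
  have "eventually (\<lambda>k. (1 - e) * simplex_weight n t j \<le> simplex_weight n (ts k) j) sequentially"
    if j: "j \<le> n" for j
  proof (cases "simplex_weight n t j = 0")
    case True
    then show ?thesis using simplex_weight_nonneg[OF ts j] by simp
  next
    case False
    then have "(1 - e) * simplex_weight n t j < simplex_weight n t j"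
      using simplex_weight_nonneg[OF t j] e by simp
    from order_tendstoD(1)[OF simplex_weight_LIMSEQ[OF lim j] this]
    show ?thesis by (rule eventually_mono) simp
  qed
  then have "\<forall>j\<in>{..n}. eventually (\<lambda>k. (1 - e) * simplex_weight n t j \<le> simplex_weight n (ts k) j) sequentially"
    by simp
  from eventually_ball_finite[OF finite_atMost this] show ?thesis by (rule eventually_mono) auto
qed

lemma lsc_inf_compact_has_minimum:
  fixes f :: "'a::topological_space \<Rightarrow> real"
  assumes lsc: "lsc_on A f" and inf_compact: "inf_compact_on A f" and "x0 \<in> A"
  shows "\<exists>x\<in>A. \<forall>y\<in>A. f x \<le> f y"
proof (rule ccontr)
  assume no_min: "\<not> ?thesis"
  define K where "K = {x \<in> A. f x \<le> f x0}"
  have "compact K" using inf_compact by (simp add: inf_compact_on_def K_def)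
  have "\<forall>y\<in>K. \<exists>U. open U \<and> {x \<in> A. f y < f x} = A \<inter> U"
    using lsc unfolding lsc_on_def openin_open by blast
  then obtain U where U: "\<And>y. y \<in> K \<Longrightarrow> open (U y) \<and> {x \<in> A. f y < f x} = A \<inter> U y"
    by metis
  have "K \<subseteq> (\<Union>y\<in>K. U y)"
  proof
    fix x assume x: "x \<in> K"
    then have "x \<in> A" by (simp add: K_def)
    then obtain y where y: "y \<in> A" "f y < f x" using no_min by (auto simp: not_le)
    then have "y \<in> K" using x by (simp add: K_def)
    then have "x \<in> U y" using U[of y] \<open>x \<in> A\<close> y(2) by blast
    with \<open>y \<in> K\<close> show "x \<in> (\<Union>y\<in>K. U y)" by blast
  qed
  then obtain K' where K': "K' \<subseteq> K" "finite K'" "K \<subseteq> (\<Union>y\<in>K'. U y)"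
    using compactE_image[OF \<open>compact K\<close>, of K U] U by blast
  have "x0 \<in> K" using \<open>x0 \<in> A\<close> by (simp add: K_def)
  then have "K' \<noteq> {}" using K' by blast
  then have "Min (f ` K') \<in> f ` K'" using K'(2) by (intro Min_in) auto
  then obtain x where x: "x \<in> K'" "f x = Min (f ` K')" by (metis imageE)
  then obtain y where y: "y \<in> K'" "x \<in> U y" using K' by blast
  have "y \<in> K" "x \<in> A" using x(1) y(1) K'(1) by (auto simp: K_def)
  then have "f y < f x" using U[of y] y(2) by blast
  moreover have "f x \<le> f y" using x y K'(2) by simp
  ultimately show False by simp
qed

definition argmin_on :: "'a set \<Rightarrow> ('a \<Rightarrow> real) \<Rightarrow> 'a" where
  "argmin_on A f = (SOME x. x \<in> A \<and> (\<forall>y\<in>A. f x \<le> f y))"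

lemma argmin_on_minimizes:
  fixes f :: "'a::topological_space \<Rightarrow> real"
  assumes "lsc_on A f" "inf_compact_on A f" "x0 \<in> A"
  shows "argmin_on A f \<in> A \<and> (\<forall>y\<in>A. f (argmin_on A f) \<le> f y)"
proof -
  have "\<exists>x. x \<in> A \<and> (\<forall>y\<in>A. f x \<le> f y)" using lsc_inf_compact_has_minimum[OF assms] by blast
  then show ?thesis unfolding argmin_on_def by (rule someI_ex)
qed

lemma compact_sequence_cluster_point:
  fixes xs :: "nat \<Rightarrow> 'a::topological_space"
  assumes K: "compact K" and xs: "\<And>k. xs k \<in> K"
  shows "\<exists>z\<in>K. \<forall>U. open U \<longrightarrow> z \<in> U \<longrightarrow> (\<forall>N. \<exists>k\<ge>N. xs k \<in> U)"
proof (rule ccontr)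
  assume "\<not> ?thesis"
  then have "\<forall>z\<in>K. \<exists>W. open (fst W) \<and> z \<in> fst W \<and> (\<forall>k\<ge>snd W. xs k \<notin> fst W)"
    by force
  then obtain W where W: "\<And>z. z \<in> K \<Longrightarrow> open (fst (W z)) \<and> z \<in> fst (W z) \<and>
      (\<forall>k\<ge>snd (W z). xs k \<notin> fst (W z))"
    by metis
  have "K \<subseteq> (\<Union>z\<in>K. fst (W z))" using W by blast
  then obtain K' where K': "K' \<subseteq> K" "finite K'" "K \<subseteq> (\<Union>z\<in>K'. fst (W z))"
    using compactE_image[OF K, of K "\<lambda>z. fst (W z)"] W by blast
  define N where "N = Max (insert 0 ((\<lambda>z. snd (W z)) ` K'))"
  obtain z where z: "z \<in> K'" "xs N \<in> fst (W z)" using K' xs[of N] by blast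
  have "snd (W z) \<le> N" unfolding N_def using K' z by (auto intro: Max_ge)
  then show False using W[of z] z K' by auto
qed

lemma weighted_sum_gt:
  fixes w f :: "'i \<Rightarrow> real"
  assumes I: "finite I" and w: "\<And>j. j \<in> I \<Longrightarrow> 0 \<le> w j" "sum w I = 1"
    and gt: "\<And>j. j \<in> I \<Longrightarrow> 0 < w j \<Longrightarrow> a < f j"
  shows "a < (\<Sum>j\<in>I. w j * f j)"
proof -
  have "\<exists>j\<in>I. 0 < w j"
  proof (rule ccontr)
    assume "\<not> ?thesis"
    then have "\<forall>j\<in>I. w j = 0" using w(1) by force
    then show False using w(2) by simp
  qed
  then obtain j where j: "j \<in> I" "0 < w j" by blast
  have "(\<Sum>j\<in>I. w j * a) < (\<Sum>j\<in>I. w j * f j)"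
  proof (rule sum_strict_mono_ex1[OF I])
    show "\<forall>j\<in>I. w j * a \<le> w j * f j"
      using w(1) gt by (metis less_eq_real_def mult_left_mono mult_zero_left)
    show "\<exists>j\<in>I. w j * a < w j * f j" using j gt[OF j] by (intro bexI[OF _ j(1)]) simp
  qed
  then show ?thesis by (simp add: sum_distrib_right[symmetric] w(2))
qed

lemma eventually_concave_simplex_point_lower_bound:
  fixes F :: "'x \<Rightarrow> 'l::real_vector \<Rightarrow> real"
  assumes concave: "\<And>x. x \<in> A \<Longrightarrow> convex_on UNIV (\<lambda>l. - F x l)"
    and bounded: "\<And>x j. x \<in> A \<Longrightarrow> j \<le> n \<Longrightarrow> - F x (P j) \<le> B"
    and t: "t \<in> std_simplex n" and ts: "\<And>k. ts k \<in> std_simplex n"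
    and lim: "coordwise_LIMSEQ n ts t" and e: "0 < e" "e \<le> 1"
  shows "eventually (\<lambda>k. \<forall>x\<in>A.
    (1 - e) * F x (simplex_point n P t) - e * B \<le> F x (simplex_point n P (ts k))) sequentially"
  using eventually_simplex_weight_ge[OF t lim ts e(1)]
proof (rule eventually_mono)
  fix k assume k: "\<forall>j\<le>n. (1 - e) * simplex_weight n t j \<le> simplex_weight n (ts k) j"
  show "\<forall>x\<in>A. (1 - e) * F x (simplex_point n P t) - e * B \<le> F x (simplex_point n P (ts k))"
  proof
    fix x assume x: "x \<in> A"
    have "- F x (simplex_point n P (ts k)) \<le> (1 - e) * - F x (simplex_point n P t) + e * B"
      by (rule convex_on_simplex_point_perturbed[OF concave[OF x] e]) (use k bounded x in auto)
    then show "(1 - e) * F x (simplex_point n P t) - e * B \<le> F x (simplex_point n P (ts k))"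
      by simp
  qed
qed

text \<open>\<open>F\<close> is lower semicontinuous only in \<open>x\<close>; the bound above, uniform in \<open>x\<close>, replaces
  joint lower semicontinuity.\<close>
lemma cluster_point_of_minimizers_is_minimizer:
  fixes F :: "'x::topological_space \<Rightarrow> 'l::{real_vector,topological_space} \<Rightarrow> real"
  assumes add: "continuous_on UNIV (\<lambda>p::'l \<times> 'l. fst p + snd p)"
    and scale: "continuous_on UNIV (\<lambda>p::real \<times> 'l. fst p *\<^sub>R snd p)"
    and usc: "\<And>x r. x \<in> A \<Longrightarrow> open {l. F x l < r}"
    and concave: "\<And>x. x \<in> A \<Longrightarrow> convex_on UNIV (\<lambda>l. - F x l)"
    and lsc: "lsc_on A (\<lambda>x. F x (simplex_point n P t))"
    and bounded: "\<And>x j. x \<in> A \<Longrightarrow> j \<le> n \<Longrightarrow> - F x (P j) \<le> B"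
    and t: "t \<in> std_simplex n" and ts: "\<And>k. ts k \<in> std_simplex n"
    and lim: "coordwise_LIMSEQ n ts t"
    and min: "\<And>k. xs k \<in> A \<and> (\<forall>y\<in>A. F (xs k) (simplex_point n P (ts k)) \<le> F y (simplex_point n P (ts k)))"
    and z: "z \<in> A" and cluster: "\<And>U N. open U \<Longrightarrow> z \<in> U \<Longrightarrow> \<exists>k\<ge>N. xs k \<in> U"
  shows "\<forall>y\<in>A. F z (simplex_point n P t) \<le> F y (simplex_point n P t)"
proof (rule ccontr)
  let ?p = "simplex_point n P"
  assume "\<not> ?thesis"
  then obtain y where y: "y \<in> A" "F y (?p t) < F z (?p t)" by force
  define \<eta> where "\<eta> = (F z (?p t) - F y (?p t)) / 4"
  define X where "X = F z (?p t) - \<eta> + B"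
  define e where "e = \<eta> / (\<bar>X\<bar> + \<eta>)"
  have \<eta>: "0 < \<eta>" using y by (simp add: \<eta>_def)
  have e: "0 < e" "e \<le> 1" using \<eta> by (simp_all add: e_def)
  have "e * X \<le> e * (\<bar>X\<bar> + \<eta>)" using e \<eta> by (intro mult_left_mono) auto
  also have "\<dots> = \<eta>" using \<eta> by (simp add: e_def)
  finally have eX: "e * X \<le> \<eta>" .
  have "eventually (\<lambda>k. ?p (ts k) \<in> {l. F y l < F y (?p t) + \<eta>}) sequentially"
    using \<eta> by (intro topological_tendstoD[OF simplex_point_LIMSEQ[OF add scale lim] usc[OF y(1)]]) simp
  with eventually_concave_simplex_point_lower_bound[where A=A and F=F and P=P and B=B,
      OF concave bounded t ts lim e]
  have "eventually (\<lambda>k. (\<forall>x\<in>A. (1 - e) * F x (?p t) - e * B \<le> F x (?p (ts k))) \<and>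
      F y (?p (ts k)) < F y (?p t) + \<eta>) sequentially"
    by (simp add: eventually_conj)
  then obtain N where N: "\<And>k. N \<le> k \<Longrightarrow> (\<forall>x\<in>A. (1 - e) * F x (?p t) - e * B \<le> F x (?p (ts k))) \<and>
      F y (?p (ts k)) < F y (?p t) + \<eta>"
    unfolding eventually_sequentially by blast
  have "openin (top_of_set A) {x \<in> A. F z (?p t) - \<eta> < F x (?p t)}"
    using lsc by (simp add: lsc_on_def)
  then obtain U where U: "open U" "{x \<in> A. F z (?p t) - \<eta> < F x (?p t)} = A \<inter> U"
    by (auto simp: openin_open)
  have "z \<in> {x \<in> A. F z (?p t) - \<eta> < F x (?p t)}" using z \<eta> by simp
  then have "z \<in> U" unfolding U(2) by blast
  then obtain k where k: "N \<le> k" "xs k \<in> U" using cluster[OF U(1)] by blast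
  have xk: "xs k \<in> A" using min by blast
  then have "xs k \<in> {x \<in> A. F z (?p t) - \<eta> < F x (?p t)}" unfolding U(2) using k(2) by blast
  then have "(1 - e) * (F z (?p t) - \<eta>) \<le> (1 - e) * F (xs k) (?p t)"
    using e(2) by (intro mult_left_mono) auto
  moreover have "(1 - e) * F (xs k) (?p t) - e * B \<le> F (xs k) (?p (ts k))" using N[OF k(1)] xk by blast
  moreover have "F (xs k) (?p (ts k)) \<le> F y (?p (ts k))" using min y(1) by blast
  moreover have "F y (?p (ts k)) < F y (?p t) + \<eta>" using N[OF k(1)] by blast
  moreover have "(1 - e) * (F z (?p t) - \<eta>) - e * B = F z (?p t) - \<eta> - e * X"
    by (simp add: X_def algebra_simps)
  moreover have "F y (?p t) = F z (?p t) - 4 * \<eta>" by (simp add: \<eta>_def field_simps)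
  ultimately show False using eX \<eta> by linarith
qed

lemma argmin_sublevel_coordwise_closed:
  fixes F :: "'x::topological_space \<Rightarrow> 'l::{real_vector,topological_space} \<Rightarrow> real"
    and P :: "nat \<Rightarrow> 'l" and A :: "'x set" and n :: nat
  defines "m t \<equiv> argmin_on A (\<lambda>x. F x (simplex_point n P t))"
  assumes add: "continuous_on UNIV (\<lambda>p::'l \<times> 'l. fst p + snd p)"
    and scale: "continuous_on UNIV (\<lambda>p::real \<times> 'l. fst p *\<^sub>R snd p)"
    and usc: "\<And>x r. x \<in> A \<Longrightarrow> open {l. F x l < r}"
    and concave: "\<And>x. x \<in> A \<Longrightarrow> convex_on UNIV (\<lambda>l. - F x l)"
    and reg: "\<And>l. l \<in> convex hull (P ` {..n}) \<Longrightarrow>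
      lsc_on A (\<lambda>x. F x l) \<and> inf_compact_on A (\<lambda>x. F x l)"
    and "x0 \<in> A"
    and unique: "\<And>l x1 x2. l \<in> convex hull (P ` {..n}) \<Longrightarrow> x1 \<in> A \<Longrightarrow> x2 \<in> A \<Longrightarrow>
      \<forall>y\<in>A. F x1 l \<le> F y l \<Longrightarrow> \<forall>y\<in>A. F x2 l \<le> F y l \<Longrightarrow> x1 = x2"
    and bounded: "\<And>x j. x \<in> A \<Longrightarrow> j \<le> n \<Longrightarrow> - F x (P j) \<le> B"
    and "j \<le> n"
  shows "coordwise_closed n {t \<in> std_simplex n. F (m t) (P j) \<le> a}"
  unfolding coordwise_closed_def
proof (intro allI impI)
  let ?p = "simplex_point n P"
  have m: "m t \<in> A \<and> (\<forall>y\<in>A. F (m t) (?p t) \<le> F y (?p t))" if "t \<in> std_simplex n" for t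
    unfolding m_def using reg[OF simplex_point_in_convex_hull[OF that]] \<open>x0 \<in> A\<close>
    by (intro argmin_on_minimizes) auto
  fix ts t assume ts: "\<forall>k. ts k \<in> {t \<in> std_simplex n. F (m t) (P j) \<le> a}" and "t \<in> cube n"
    and lim: "coordwise_LIMSEQ n ts t"
  have ts_simplex: "ts k \<in> std_simplex n" for k using ts by simp
  have t: "t \<in> std_simplex n"
    by (rule coordwise_closed_std_simplex[unfolded coordwise_closed_def, rule_format])
      (use ts_simplex \<open>t \<in> cube n\<close> lim in auto)
  have "P j \<in> convex hull (P ` {..n})" using \<open>j \<le> n\<close> by (intro hull_inc) auto
  then have "compact {x \<in> A. F x (P j) \<le> a}" using reg by (simp add: inf_compact_on_def)
  moreover have "m (ts k) \<in> {x \<in> A. F x (P j) \<le> a}" for k using m[OF ts_simplex] ts by simp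
  ultimately obtain z where z: "z \<in> A" "F z (P j) \<le> a"
    and cluster: "\<forall>U. open U \<longrightarrow> z \<in> U \<longrightarrow> (\<forall>N. \<exists>k\<ge>N. m (ts k) \<in> U)"
    using compact_sequence_cluster_point[of _ "\<lambda>k. m (ts k)"] by blast
  have "\<forall>y\<in>A. F z (?p t) \<le> F y (?p t)"
  proof (rule cluster_point_of_minimizers_is_minimizer[where xs="\<lambda>k. m (ts k)" and B=B])
    show "lsc_on A (\<lambda>x. F x (?p t))" using reg[OF simplex_point_in_convex_hull[OF t]] by blast
  qed (use add scale usc concave bounded t ts_simplex lim m z(1) cluster in auto)
  then have "z = m t"
    using unique[OF simplex_point_in_convex_hull[OF t] z(1)] m[OF t] by blast
  then show "t \<in> {t \<in> std_simplex n. F (m t) (P j) \<le> a}" using t z(2) by simp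
qed

text \<open>Otherwise the sets \<open>T j\<close> of simplex points whose minimizer lies below \<open>a\<close> at vertex \<open>j\<close>
  have no common point; KKM yields a point whose minimizer exceeds \<open>a\<close> at every vertex of
  positive weight, which concavity turns into a value above \<open>a\<close> at the point itself.\<close>
lemma minimax_simplex:
  fixes F :: "'x::topological_space \<Rightarrow> 'l::{real_vector,topological_space} \<Rightarrow> real"
    and P :: "nat \<Rightarrow> 'l"
  assumes add: "continuous_on UNIV (\<lambda>p::'l \<times> 'l. fst p + snd p)"
    and scale: "continuous_on UNIV (\<lambda>p::real \<times> 'l. fst p *\<^sub>R snd p)"
    and usc: "\<And>x r. x \<in> A \<Longrightarrow> open {l. F x l < r}"
    and concave: "\<And>x. x \<in> A \<Longrightarrow> convex_on UNIV (\<lambda>l. - F x l)"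
    and reg: "\<And>l. l \<in> convex hull (P ` {..n}) \<Longrightarrow>
      lsc_on A (\<lambda>x. F x l) \<and> inf_compact_on A (\<lambda>x. F x l)"
    and "x0 \<in> A"
    and unique: "\<And>l x1 x2. l \<in> convex hull (P ` {..n}) \<Longrightarrow> x1 \<in> A \<Longrightarrow> x2 \<in> A \<Longrightarrow>
      \<forall>y\<in>A. F x1 l \<le> F y l \<Longrightarrow> \<forall>y\<in>A. F x2 l \<le> F y l \<Longrightarrow> x1 = x2"
    and bound: "\<And>l. l \<in> convex hull (P ` {..n}) \<Longrightarrow> \<exists>x\<in>A. F x l \<le> a"
  shows "\<exists>x\<in>A. \<forall>j\<le>n. F x (P j) \<le> a"
proof (rule ccontr)
  let ?p = "simplex_point n P"
  define m where "m t = argmin_on A (\<lambda>x. F x (?p t))" for t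
  assume "\<not> ?thesis"
  then have above: "\<exists>j\<le>n. a < F x (P j)" if "x \<in> A" for x using that by (auto simp: not_le)
  have m: "m t \<in> A \<and> (\<forall>y\<in>A. F (m t) (?p t) \<le> F y (?p t))" if "t \<in> std_simplex n" for t
    unfolding m_def using reg[OF simplex_point_in_convex_hull[OF that]] \<open>x0 \<in> A\<close>
    by (intro argmin_on_minimizes) auto
  define B where "B = Max ((\<lambda>j. - F (argmin_on A (\<lambda>x. F x (P j))) (P j)) ` {..n})"
  have bounded: "- F x (P j) \<le> B" if "x \<in> A" "j \<le> n" for x j
  proof -
    let ?x = "argmin_on A (\<lambda>x. F x (P j))"
    have "?x \<in> A \<and> (\<forall>y\<in>A. F ?x (P j) \<le> F y (P j))"
      using reg[of "P j"] \<open>x0 \<in> A\<close> that(2) by (intro argmin_on_minimizes) (auto intro: hull_inc)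
    then have "- F x (P j) \<le> - F ?x (P j)" using that(1) by simp
    also have "\<dots> \<le> B" unfolding B_def using that(2) by (intro Max_ge) auto
    finally show ?thesis .
  qed
  define T where "T j = {t \<in> std_simplex n. F (m t) (P j) \<le> a}" for j
  have "coordwise_closed n (T j)" if "j \<le> n" for j
    unfolding T_def m_def
    by (rule argmin_sublevel_coordwise_closed[OF add scale usc concave reg \<open>x0 \<in> A\<close> unique bounded that])
  moreover have "\<exists>j\<le>n. t \<notin> T j" if "t \<in> std_simplex n" for t
    using above[of "m t"] m[OF that] by (auto simp: T_def not_le)
  ultimately obtain t where t: "t \<in> std_simplex n"
    and outside: "\<forall>j\<le>n. 0 < simplex_weight n t j \<longrightarrow> t \<notin> T j"
    using KKM_std_simplex[of n T] by blast
  have "a < (\<Sum>j\<le>n. simplex_weight n t j * F (m t) (P j))"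
    using outside t by (intro weighted_sum_gt) (auto simp: sum_simplex_weight simplex_weight_nonneg T_def)
  also have "\<dots> \<le> F (m t) (?p t)"
    using convex_on_simplex_point[OF concave t, of "m t" P] m[OF t] by (simp add: sum_negf)
  also have "\<dots> \<le> a"
    using bound[OF simplex_point_in_convex_hull[OF t]] m[OF t] by force
  finally show False by simp
qed

lemma minimax_finite:
  fixes F :: "'x::topological_space \<Rightarrow> 'l::{real_vector,topological_space} \<Rightarrow> real"
  assumes add: "continuous_on UNIV (\<lambda>p::'l \<times> 'l. fst p + snd p)"
    and scale: "continuous_on UNIV (\<lambda>p::real \<times> 'l. fst p *\<^sub>R snd p)"
    and usc: "\<And>x r. x \<in> A \<Longrightarrow> open {l. F x l < r}"
    and concave: "\<And>x. x \<in> A \<Longrightarrow> convex_on UNIV (\<lambda>l. - F x l)"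
    and S: "finite S" "S \<noteq> {}"
    and reg: "\<And>l. l \<in> convex hull S \<Longrightarrow> lsc_on A (\<lambda>x. F x l) \<and> inf_compact_on A (\<lambda>x. F x l)"
    and "x0 \<in> A"
    and unique: "\<And>l x1 x2. l \<in> convex hull S \<Longrightarrow> x1 \<in> A \<Longrightarrow> x2 \<in> A \<Longrightarrow>
      \<forall>y\<in>A. F x1 l \<le> F y l \<Longrightarrow> \<forall>y\<in>A. F x2 l \<le> F y l \<Longrightarrow> x1 = x2"
    and bound: "\<And>l. l \<in> convex hull S \<Longrightarrow> \<exists>x\<in>A. F x l \<le> a"
  shows "\<exists>x\<in>A. \<forall>p\<in>S. F x p \<le> a"
proof -
  obtain m :: nat and P :: "nat \<Rightarrow> 'l" where P: "S = P ` {i. i < m}" using finite_imp_nat_seg_image_inj_on[OF S(1)] by blast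
  with S(2) have "{i. i < m} = {..m - 1}" by auto
  with P have "S = P ` {..m - 1}" by simp
  with assms show ?thesis using minimax_simplex[of A F P "m - 1" x0 a] by auto
qed

lemma finite_superlevel_cover:
  fixes g :: "'x \<Rightarrow> 'x::topological_space \<Rightarrow> real"
  assumes lsc: "\<And>y. y \<in> A \<Longrightarrow> lsc_on A (g y)"
    and compact: "compact {x \<in> A. g u x \<le> a}"
    and diagonal: "\<And>y. y \<in> A \<Longrightarrow> a < g y y"
  obtains K where "finite K" "K \<subseteq> A" "\<And>x. x \<in> A \<Longrightarrow> \<exists>y\<in>insert u K. a < g y x"
proof -
  define L where "L = {x \<in> A. g u x \<le> a}"
  have "\<forall>y\<in>L. \<exists>U. open U \<and> {x \<in> A. a < g y x} = A \<inter> U"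
    using lsc unfolding L_def lsc_on_def openin_open by blast
  then obtain U where U: "\<And>y. y \<in> L \<Longrightarrow> open (U y) \<and> {x \<in> A. a < g y x} = A \<inter> U y"
    by metis
  have "L \<subseteq> (\<Union>y\<in>L. U y)"
  proof
    fix y assume y: "y \<in> L"
    then have "y \<in> {x \<in> A. a < g y x}" using diagonal by (simp add: L_def)
    with U[OF y] y show "y \<in> (\<Union>y\<in>L. U y)" by blast
  qed
  then obtain K where K: "K \<subseteq> L" "finite K" "L \<subseteq> (\<Union>y\<in>K. U y)"
    using compactE_image[OF compact[folded L_def], of L U] U by blast
  have "\<exists>y\<in>insert u K. a < g y x" if x: "x \<in> A" for x
  proof (cases "a < g u x")
    case False
    then have "x \<in> L" using x by (simp add: L_def)
    then obtain y where y: "y \<in> K" "x \<in> U y" using K(3) by blast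
    then have "x \<in> {x \<in> A. a < g y x}" using U[of y] K(1) x by blast
    with y(1) show ?thesis by blast
  qed simp
  moreover have "K \<subseteq> A" using K(1) by (auto simp: L_def)
  ultimately show ?thesis using that K(2) by blast
qed

section \<open>The classes \<open>\<G>\<close>, \<open>\<H>\<close>, \<open>\<M>\<close> and the theorem\<close>

lemma class_H_lam:
  assumes "\<Psi> \<in> class_H y0"
  shows "\<Psi> x (lam y0 \<Psi> x) = y0"
proof -
  have "y0 \<in> range (\<Psi> x)" using assms by (simp add: class_H_def)
  then obtain l where l: "\<Psi> x l = y0" by auto
  have "inj (\<Psi> x)" using assms by (simp add: class_H_def)
  with l have "\<exists>!l. \<Psi> x l = y0" by (auto dest: injD)
  then show ?thesis unfolding lam_def by (rule theI')
qed

lemma class_H_lam_unique: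
  assumes H: "\<Psi> \<in> class_H y0" and "\<Psi> x l = y0"
  shows "l = lam y0 \<Psi> x"
proof -
  have "inj (\<Psi> x)" using H by (simp add: class_H_def)
  moreover have "\<Psi> x l = \<Psi> x (lam y0 \<Psi> x)" using class_H_lam[OF H] \<open>\<Psi> x l = y0\<close> by simp
  ultimately show ?thesis by (rule injD)
qed

lemma class_G_zero: "\<phi> \<in> class_G y0 \<Longrightarrow> \<phi> y0 = 0"
  by (auto simp: class_G_def)

lemma class_G_pos:
  assumes G: "\<phi> \<in> class_G y0" and "y \<noteq> y0"
  shows "0 < \<phi> y"
proof -
  have "0 \<le> \<phi> y" "\<phi> -` {0} = {y0}" using G by (auto simp: class_G_def)
  with \<open>y \<noteq> y0\<close> show ?thesis by (metis order_le_less singletonD vimage_singleton_eq)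
qed

lemma theta_less_imp_gap:
  assumes G: "\<phi> \<in> class_G y0" and H: "\<Psi> \<in> class_H y0" and M: "J \<in> class_M"
    and mu: "theta y0 \<phi> \<Psi> J < \<mu>"
  shows "0 < \<mu>" and "\<exists>u x. u \<in> minima J \<and> J x - J u < \<mu> * \<phi> (\<Psi> x (lam y0 \<Psi> u))"
proof -
  define Q where "Q = {(J x - J u) / \<phi> (\<Psi> x (lam y0 \<Psi> u)) | u x.
      u \<in> minima J \<and> lam y0 \<Psi> x \<noteq> lam y0 \<Psi> u}"
  obtain u0 where u0: "u0 \<in> minima J" using M by (auto simp: class_M_def)
  obtain x1 x2 where "lam y0 \<Psi> x1 \<noteq> lam y0 \<Psi> x2" using H by (auto simp: class_H_def lam_def)
  then obtain x where "lam y0 \<Psi> x \<noteq> lam y0 \<Psi> u0" by metis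
  with u0 have "Q \<noteq> {}" by (auto simp: Q_def)
  have Q_nonneg: "0 \<le> q" if "q \<in> Q" for q
    using that G by (auto simp: Q_def minima_def class_G_def intro!: divide_nonneg_nonneg)
  have "0 \<le> theta y0 \<phi> \<Psi> J"
    unfolding theta_def Q_def[symmetric] using \<open>Q \<noteq> {}\<close> Q_nonneg by (intro cInf_greatest) auto
  then show "0 < \<mu>" using mu by linarith
  have "\<exists>q\<in>Q. q < \<mu>"
    using mu \<open>Q \<noteq> {}\<close> Q_nonneg unfolding theta_def Q_def[symmetric]
    by (simp add: cInf_less_iff bdd_belowI[of _ 0])
  then obtain u x where u: "u \<in> minima J" and x: "lam y0 \<Psi> x \<noteq> lam y0 \<Psi> u"
    and ratio: "(J x - J u) / \<phi> (\<Psi> x (lam y0 \<Psi> u)) < \<mu>"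
    by (auto simp: Q_def)
  have "\<Psi> x (lam y0 \<Psi> u) \<noteq> y0"
  proof
    assume "\<Psi> x (lam y0 \<Psi> u) = y0"
    then have "lam y0 \<Psi> u = lam y0 \<Psi> x" by (rule class_H_lam_unique[OF H])
    with x show False by simp
  qed
  then have "0 < \<phi> (\<Psi> x (lam y0 \<Psi> u))" by (rule class_G_pos[OF G])
  with ratio have "J x - J u < \<mu> * \<phi> (\<Psi> x (lam y0 \<Psi> u))"
    by (simp add: pos_divide_less_eq mult.commute)
  with u show "\<exists>u x. u \<in> minima J \<and> J x - J u < \<mu> * \<phi> (\<Psi> x (lam y0 \<Psi> u))" by blast
qed

lemma class_G_H_open_sublevel:
  assumes G: "\<phi> \<in> class_G y0" and H: "\<Psi> \<in> class_H y0" and "0 < \<mu>"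
  shows "open {l. c - \<mu> * \<phi> (\<Psi> x l) < r}"
proof -
  have "lsc_on UNIV \<phi>" using G by (simp add: class_G_def)
  then have "open {y. (c - r) / \<mu> < \<phi> y}" unfolding lsc_on_def by simp
  moreover have "continuous_on UNIV (\<Psi> x)" using H by (simp add: class_H_def)
  ultimately have "open (\<Psi> x -` {y. (c - r) / \<mu> < \<phi> y})" by (rule open_vimage)
  also have "\<Psi> x -` {y. (c - r) / \<mu> < \<phi> y} = {l. c - \<mu> * \<phi> (\<Psi> x l) < r}"
    using \<open>0 < \<mu>\<close> by (auto simp: pos_divide_less_eq mult.commute)
  finally show ?thesis .
qed

text \<open>Near \<open>lam u\<close> the function of \<open>x0\<close> stays below \<open>J u\<close>; away from it \<open>\<phi> (\<Psi> u \<cdot>)\<close> is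
  bounded away from \<open>0\<close>, because \<open>\<Psi> u\<close> is an injective open map.\<close>
lemma class_G_H_uniform_bound:
  assumes G: "\<phi> \<in> class_G y0" and H: "\<Psi> \<in> class_H y0" and mu: "0 < \<mu>"
    and gap: "J x0 - J u < \<mu> * \<phi> (\<Psi> x0 (lam y0 \<Psi> u))"
  obtains a where "a < J u" and "\<And>l. J x0 - \<mu> * \<phi> (\<Psi> x0 l) \<le> a \<or> J u - \<mu> * \<phi> (\<Psi> u l) \<le> a"
proof -
  define \<delta> where "\<delta> = J u - (J x0 - \<mu> * \<phi> (\<Psi> x0 (lam y0 \<Psi> u)))"
  define W where "W = {l. J x0 - \<mu> * \<phi> (\<Psi> x0 l) < J u - \<delta> / 2}"
  have "0 < \<delta>" using gap by (simp add: \<delta>_def)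
  have "open W" unfolding W_def by (rule class_G_H_open_sublevel[OF G H mu])
  then have "open (\<Psi> u ` W)" using H by (simp add: class_H_def)
  moreover have "lam y0 \<Psi> u \<in> W"
    unfolding W_def mem_Collect_eq \<delta>_def using gap by (simp add: field_simps)
  then have "y0 \<in> \<Psi> u ` W" using class_H_lam[OF H, of u] by force
  moreover have "\<forall>V. (\<exists>U. open U \<and> y0 \<in> U \<and> U \<subseteq> V) \<longrightarrow> (\<exists>c>0. \<forall>y\<in>-V. c \<le> \<phi> y)"
    using G by (simp add: class_G_def)
  ultimately have "\<exists>c>0. \<forall>y\<in>-(\<Psi> u ` W). c \<le> \<phi> y" by blast
  then obtain \<epsilon> where \<epsilon>: "0 < \<epsilon>" "\<And>y. y \<notin> \<Psi> u ` W \<Longrightarrow> \<epsilon> \<le> \<phi> y" by auto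
  define a where "a = max (J u - \<delta> / 2) (J u - \<mu> * \<epsilon>)"
  show ?thesis
  proof
    show "a < J u" using \<open>0 < \<delta>\<close> \<epsilon>(1) mu by (simp add: a_def)
    fix l
    show "J x0 - \<mu> * \<phi> (\<Psi> x0 l) \<le> a \<or> J u - \<mu> * \<phi> (\<Psi> u l) \<le> a"
    proof (cases "l \<in> W")
      case True
      then show ?thesis by (auto simp: W_def a_def)
    next
      case False
      then have "\<Psi> u l \<notin> \<Psi> u ` W" using H by (auto simp: class_H_def inj_eq)
      then have "\<mu> * \<epsilon> \<le> \<mu> * \<phi> (\<Psi> u l)" using \<epsilon>(2) mu by simp
      then show ?thesis by (auto simp: a_def)
    qed
  qed
qed

lemma filtering_cover_two_points:
  assumes "filtering_cover N"
  shows "\<exists>A\<in>N. u \<in> A \<and> x \<in> A"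
proof -
  have "u \<in> \<Union>N" "x \<in> \<Union>N" using assms by (simp_all add: filtering_cover_def)
  then obtain A1 A2 where A12: "A1 \<in> N" "A2 \<in> N" "u \<in> A1" "x \<in> A2" by blast
  have "\<forall>A1\<in>N. \<forall>A2\<in>N. \<exists>A3\<in>N. A1 \<union> A2 \<subseteq> A3" using assms by (simp add: filtering_cover_def)
  then obtain A3 where "A3 \<in> N" "A1 \<union> A2 \<subseteq> A3" using A12(1,2) by blast
  with A12(3,4) show ?thesis by blast
qed

lemma two_minimizers_of_uniform_bound:
  fixes F :: "'x::topological_space \<Rightarrow> 'l::{real_vector,topological_space} \<Rightarrow> real"
    and L :: "'x \<Rightarrow> 'l"
  assumes add: "continuous_on UNIV (\<lambda>p::'l \<times> 'l. fst p + snd p)"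
    and scale: "continuous_on UNIV (\<lambda>p::real \<times> 'l. fst p *\<^sub>R snd p)"
    and usc: "\<And>x r. open {l. F x l < r}"
    and concave: "\<And>x. convex_on UNIV (\<lambda>l. - F x l)"
    and reg: "\<And>l. l \<in> convex hull (L ` A) \<Longrightarrow> lsc_on A (\<lambda>x. F x l) \<and> inf_compact_on A (\<lambda>x. F x l)"
    and diagonal: "\<And>y. y \<in> A \<Longrightarrow> a < F y (L y)"
    and "u \<in> A" "x0 \<in> A" and bound: "\<And>l. F x0 l \<le> a \<or> F u l \<le> a"
  shows "\<exists>l\<in>convex hull (L ` A). \<exists>x1\<in>A. \<exists>x2\<in>A. x1 \<noteq> x2 \<and>
           (\<forall>x\<in>A. F x1 l \<le> F x l) \<and> (\<forall>x\<in>A. F x2 l \<le> F x l)"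
proof (rule ccontr)
  assume no_two_minima: "\<not> ?thesis"
  have L_in_hull: "L y \<in> convex hull (L ` A)" if "y \<in> A" for y
    using that by (intro hull_inc imageI)
  have "compact {x \<in> A. F x (L u) \<le> a}"
    using reg[OF L_in_hull[OF \<open>u \<in> A\<close>]] by (simp add: inf_compact_on_def)
  then obtain K where K: "finite K" "K \<subseteq> A"
    and above: "\<And>x. x \<in> A \<Longrightarrow> \<exists>y\<in>insert u K. a < F x (L y)"
    using finite_superlevel_cover[of A "\<lambda>y x. F x (L y)" u a] reg[OF L_in_hull] diagonal by blast
  have hull_K: "convex hull (L ` insert u K) \<subseteq> convex hull (L ` A)"
    using K(2) \<open>u \<in> A\<close> by (intro hull_mono) auto
  have "\<exists>x\<in>A. \<forall>p\<in>L ` insert u K. F x p \<le> a"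
  proof (rule minimax_finite[OF add scale usc concave])
    show "lsc_on A (\<lambda>x. F x l) \<and> inf_compact_on A (\<lambda>x. F x l)"
      if "l \<in> convex hull (L ` insert u K)" for l
      using reg hull_K that by blast
    show "x1 = x2" if "l \<in> convex hull (L ` insert u K)" "x1 \<in> A" "x2 \<in> A"
      "\<forall>y\<in>A. F x1 l \<le> F y l" "\<forall>y\<in>A. F x2 l \<le> F y l" for l x1 x2
      using no_two_minima hull_K that by blast
    show "\<exists>x\<in>A. F x l \<le> a" for l using bound \<open>u \<in> A\<close> \<open>x0 \<in> A\<close> by blast
  qed (use K(1) \<open>x0 \<in> A\<close> in auto)
  then show False using above by force
qed

theorem theorem3p3:
  fixes y0 :: "'y::topological_space"
    and \<phi> :: "'y \<Rightarrow> real"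
    and \<Psi> :: "'x::topological_space \<Rightarrow> 'l::{real_vector, t2_space} \<Rightarrow> 'y"
    and J :: "'x \<Rightarrow> real"
    and \<mu> :: real
    and N :: "'x set set"
  assumes tvs_add: "continuous_on UNIV (\<lambda>p::'l \<times> 'l. fst p + snd p)"
    and tvs_scale: "continuous_on UNIV (\<lambda>p::real \<times> 'l. fst p *\<^sub>R snd p)"
    and G: "\<phi> \<in> class_G y0"
    and H: "\<Psi> \<in> class_H y0"
    and M: "J \<in> class_M"
    and conv: "\<And>x. convex_on UNIV (\<lambda>l. \<phi> (\<Psi> x l))"
    and mu: "\<mu> > theta y0 \<phi> \<Psi> J"
    and N: "filtering_cover N"
    and reg: "\<And>A l. A \<in> N \<Longrightarrow> l \<in> convex hull (range (lam y0 \<Psi>)) \<Longrightarrow>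
              lsc_on A (\<lambda>x. J x - \<mu> * \<phi> (\<Psi> x l)) \<and>
              inf_compact_on A (\<lambda>x. J x - \<mu> * \<phi> (\<Psi> x l))"
  shows "\<exists>A\<in>N. \<exists>l\<in>convex hull (lam y0 \<Psi> ` A). \<exists>x1\<in>A. \<exists>x2\<in>A. x1 \<noteq> x2 \<and>
           (\<forall>x\<in>A. J x1 - \<mu> * \<phi> (\<Psi> x1 l) \<le> J x - \<mu> * \<phi> (\<Psi> x l)) \<and>
           (\<forall>x\<in>A. J x2 - \<mu> * \<phi> (\<Psi> x2 l) \<le> J x - \<mu> * \<phi> (\<Psi> x l))"
proof -
  have "0 < \<mu>" using theta_less_imp_gap(1)[OF G H M mu] .
  obtain u x0 where u: "u \<in> minima J" and gap: "J x0 - J u < \<mu> * \<phi> (\<Psi> x0 (lam y0 \<Psi> u))"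
    using theta_less_imp_gap(2)[OF G H M mu] by blast
  obtain A where A: "A \<in> N" "u \<in> A" "x0 \<in> A" using filtering_cover_two_points[OF N] by blast
  obtain a where "a < J u" and bound: "\<And>l. J x0 - \<mu> * \<phi> (\<Psi> x0 l) \<le> a \<or> J u - \<mu> * \<phi> (\<Psi> u l) \<le> a"
    using class_G_H_uniform_bound[OF G H \<open>0 < \<mu>\<close> gap] by blast
  have "\<exists>l\<in>convex hull (lam y0 \<Psi> ` A). \<exists>x1\<in>A. \<exists>x2\<in>A. x1 \<noteq> x2 \<and>
           (\<forall>x\<in>A. J x1 - \<mu> * \<phi> (\<Psi> x1 l) \<le> J x - \<mu> * \<phi> (\<Psi> x l)) \<and>
           (\<forall>x\<in>A. J x2 - \<mu> * \<phi> (\<Psi> x2 l) \<le> J x - \<mu> * \<phi> (\<Psi> x l))"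
  proof (rule two_minimizers_of_uniform_bound[OF tvs_add tvs_scale _ _ _ _ A(2,3) bound])
    show "open {l. J x - \<mu> * \<phi> (\<Psi> x l) < r}" for x r
      by (rule class_G_H_open_sublevel[OF G H \<open>0 < \<mu>\<close>])
    have "convex_on UNIV (\<lambda>l. \<mu> * \<phi> (\<Psi> x l) + - J x)" for x
      using conv[of x] \<open>0 < \<mu>\<close> by (intro convex_on_add convex_on_cmul) (auto simp: convex_on_const)
    then show "convex_on UNIV (\<lambda>l. - (J x - \<mu> * \<phi> (\<Psi> x l)))" for x by simp
    show "lsc_on A (\<lambda>x. J x - \<mu> * \<phi> (\<Psi> x l)) \<and> inf_compact_on A (\<lambda>x. J x - \<mu> * \<phi> (\<Psi> x l))"
      if "l \<in> convex hull (lam y0 \<Psi> ` A)" for l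
      using reg[OF A(1)] hull_mono[of "lam y0 \<Psi> ` A" "range (lam y0 \<Psi>)"] that by blast
    show "a < J y - \<mu> * \<phi> (\<Psi> y (lam y0 \<Psi> y))" for y
      using \<open>a < J u\<close> u by (simp add: class_H_lam[OF H] class_G_zero[OF G] minima_def)
        (meson less_le_trans)
  qed
  with A(1) show ?thesis by blast
qed

end
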